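(* Let $\mathcal{C}$ be a finite set of size $k\geq1$ and let $(\omega_n)_{n=0}^\infty$ be a sequence of distributions on $\mathcal{C}$ such that $\omega_n\trianglelefteq\omega_{n+1}$ for all $n$. Suppose there is a real $A\geq 1$ such that for all $n\in\mathbb{N}$ and all $\alpha\in\mathcal{D}^+(\omega_n,\omega_{n+1})$, \[\|\omega_{n+1}-\omega_n\|_1\leq A\cdot(\omega_{n+1}(\alpha)-\omega_n(\alpha)).\] Then \[\sum_{n=0}^\infty\|\omega_{n+1}-\omega_n\|_1\leq\frac{(1+A)^{k+1}}{A}\cdot\mathrm{disc}(\omega_0)<\infty.\]
   Context: A distribution on $\mathcal{C}$ is a function $\omega\colon\mathcal{C}\to[0,1]$ with $\sum_\alpha\omega(\alpha)=1$; $\|\omega\|_1=\sum_\alpha|\omega(\alpha)|$; $\mathrm{disc}(\omega)=\max_{\alpha}|\omega(\alpha)-1/k|$. For distributions $\omega,\eta$: $\mathcal{D}^+(\omega,\eta)=\{\alpha:\eta(\alpha)>\omega(\alpha)\}$, $\mathcal{D}^-(\omega,\eta)=\{\alpha:\eta(\alpha)<\omega(\alpha)\}$. We write $\omega\vartriangleleft\eta$ if there is $\alpha\in\mathcal{D}^+(\omega,\eta)$ such that $\eta(\alpha)\leq\eta(\beta)$ for all $\beta\in\mathcal{D}^-(\omega,\eta)$, and $\omega\trianglelefteq\eta$ if $\omega\vartriangleleft\eta$ or $\omega=\eta$. *)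

theory Defs
  imports "HOL-Analysis.Analysis"
begin

(* A distribution on a finite set C: a function C -> [0,1] summing to 1.
   Functions are of type 'a => real; values outside C are irrelevant. *)
definition is_distribution :: "'a set \<Rightarrow> ('a \<Rightarrow> real) \<Rightarrow> bool" where
  "is_distribution C \<omega> \<longleftrightarrow> (\<forall>\<alpha>\<in>C. 0 \<le> \<omega> \<alpha> \<and> \<omega> \<alpha> \<le> 1) \<and> (\<Sum>\<alpha>\<in>C. \<omega> \<alpha>) = 1"

definition l1norm :: "'a set \<Rightarrow> ('a \<Rightarrow> real) \<Rightarrow> real" where
  "l1norm C \<omega> = (\<Sum>\<alpha>\<in>C. \<bar>\<omega> \<alpha>\<bar>)"

definition disc :: "'a set \<Rightarrow> ('a \<Rightarrow> real) \<Rightarrow> real" where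
  "disc C \<omega> = (MAX \<alpha>\<in>C. \<bar>\<omega> \<alpha> - 1 / real (card C)\<bar>)"

definition Dplus :: "'a set \<Rightarrow> ('a \<Rightarrow> real) \<Rightarrow> ('a \<Rightarrow> real) \<Rightarrow> 'a set" where
  "Dplus C \<omega> \<eta> = {\<alpha>\<in>C. \<eta> \<alpha> > \<omega> \<alpha>}"

definition Dminus :: "'a set \<Rightarrow> ('a \<Rightarrow> real) \<Rightarrow> ('a \<Rightarrow> real) \<Rightarrow> 'a set" where
  "Dminus C \<omega> \<eta> = {\<alpha>\<in>C. \<eta> \<alpha> < \<omega> \<alpha>}"

definition tri_less :: "'a set \<Rightarrow> ('a \<Rightarrow> real) \<Rightarrow> ('a \<Rightarrow> real) \<Rightarrow> bool" where
  "tri_less C \<omega> \<eta> \<longleftrightarrow> (\<exists>\<alpha>\<in>Dplus C \<omega> \<eta>. \<forall>\<beta>\<in>Dminus C \<omega> \<eta>. \<eta> \<alpha> \<le> \<eta> \<beta>)"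

definition tri_le :: "'a set \<Rightarrow> ('a \<Rightarrow> real) \<Rightarrow> ('a \<Rightarrow> real) \<Rightarrow> bool" where
  "tri_le C \<omega> \<eta> \<longleftrightarrow> tri_less C \<omega> \<eta> \<or> (\<forall>\<alpha>\<in>C. \<omega> \<alpha> = \<eta> \<alpha>)"

end

theory Submission
  imports Defs
begin

text \<open>
  Let \<open>y = 1 + A\<close> and let \<open>m j \<omega>\<close> be the least total mass that \<open>\<omega>\<close> puts on \<open>j\<close> elements
  of \<open>C\<close>. The potential \<open>\<Phi> \<omega> = (\<Sum>j=1..<k. y^(k-j) * (j/k - m j \<omega>))\<close> is nonnegative and at
  most \<open>y^(k+1) * disc \<omega> / A^2\<close>. In a step \<open>\<omega> \<lhd> \<eta>\<close> with witness \<open>\<alpha>\<close>, let \<open>U\<close> consist of \<open>\<alpha>\<close>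
  and all elements where \<open>\<eta>\<close> is below \<open>\<eta> \<alpha>\<close>. No element of \<open>U\<close> loses mass, so \<open>m j\<close> does not
  decrease for \<open>j < |U|\<close>, and \<open>m |U|\<close> grows at least by the gain at \<open>\<alpha>\<close>, hence by
  \<open>\<parallel>\<eta> - \<omega>\<parallel>/A\<close>; for larger \<open>j\<close> it drops by at most \<open>\<parallel>\<eta> - \<omega>\<parallel>/2\<close>. The geometric weights make the
  gain dominate, so \<open>\<parallel>\<eta> - \<omega>\<parallel> \<le> A * (\<Phi> \<omega> - \<Phi> \<eta>)\<close>, and the series telescopes.
\<close>

definition min_subset_sum :: "'a set \<Rightarrow> nat \<Rightarrow> ('a \<Rightarrow> real) \<Rightarrow> real" where
  "min_subset_sum C j w = Min (sum w ` {S. S \<subseteq> C \<and> card S = j})"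

lemma finite_subsets_with_card: "finite C \<Longrightarrow> finite {S. S \<subseteq> C \<and> card S = j}"
  by (rule finite_subset[of _ "Pow C"]) auto

lemma min_subset_sum_le:
  assumes "finite C" "S \<subseteq> C" "card S = j"
  shows "min_subset_sum C j w \<le> sum w S"
  unfolding min_subset_sum_def
  using assms finite_subsets_with_card by (intro Min_le) auto

lemma min_subset_sum_attained:
  assumes "finite C" "j \<le> card C"
  obtains S where "S \<subseteq> C" "card S = j" "min_subset_sum C j w = sum w S"
proof -
  obtain S0 where "S0 \<subseteq> C" "card S0 = j"
    using obtain_subset_with_card_n[OF assms(2)] by auto
  then have "min_subset_sum C j w \<in> sum w ` {S. S \<subseteq> C \<and> card S = j}"
    unfolding min_subset_sum_def using assms(1) finite_subsets_with_card
    by (intro Min_in) auto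
  then show thesis using that by auto
qed

lemma min_subset_sum_greatest:
  assumes "finite C" "j \<le> card C" "\<And>S. S \<subseteq> C \<Longrightarrow> card S = j \<Longrightarrow> b \<le> sum w S"
  shows "b \<le> min_subset_sum C j w"
  using min_subset_sum_attained[OF assms(1,2), of w] assms(3) by metis

lemma min_subset_sum_cong:
  assumes "\<And>x. x \<in> C \<Longrightarrow> w x = v x"
  shows "min_subset_sum C j w = min_subset_sum C j v"
proof -
  have "sum w ` {S. S \<subseteq> C \<and> card S = j} = sum v ` {S. S \<subseteq> C \<and> card S = j}"
    using assms by (intro image_cong refl sum.cong) auto
  then show ?thesis unfolding min_subset_sum_def by simp
qed

lemma exists_subset_sum_le_average:
  fixes w :: "'a \<Rightarrow> real"
  assumes "finite C" "j \<le> card C"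
  shows "\<exists>S. S \<subseteq> C \<and> card S = j \<and> real (card C) * sum w S \<le> real j * sum w C"
  using assms
proof (induction "card C" arbitrary: C)
  case 0
  then show ?case by (intro exI[of _ "{}"]) auto
next
  case (Suc n)
  show ?case
  proof (cases "j = card C")
    case True
    then show ?thesis by (intro exI[of _ C]) auto
  next
    case False
    obtain m where m: "m \<in> C" "w m = Max (w ` C)"
      using Max_in[of "w ` C"] Suc.prems Suc.hyps(2) by fastforce
    have m_max: "w x \<le> w m" if "x \<in> C" for x
      using m(2) Suc.prems(1) that by simp
    have card_C': "card (C - {m}) = n" using Suc.hyps(2) m(1) by simp
    have "j \<le> n" using Suc.prems(2) False Suc.hyps(2) by simp
    then obtain S where S: "S \<subseteq> C - {m}" "card S = j"
      "real n * sum w S \<le> real j * sum w (C - {m})"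
      using Suc.hyps(1)[of "C - {m}"] card_C' Suc.prems(1) by auto
    have "sum w S \<le> real j * w m"
      using sum_bounded_above[of S w "w m"] S m_max by auto
    moreover have "sum w C = sum w (C - {m}) + w m"
      using Suc.prems(1) m(1) by (simp add: sum.remove)
    moreover have "real (card C) = real n + 1" using Suc.hyps(2) by simp
    ultimately have "real (card C) * sum w S \<le> real j * sum w C"
      using S(3) by (simp add: algebra_simps)
    then show ?thesis using S by auto
  qed
qed

lemma exchange_into_lower_set:
  fixes v :: "'a \<Rightarrow> real"
  assumes "finite C" "U \<subseteq> C" "S \<subseteq> C" "card S \<le> card U"
    and "\<And>b. b \<in> U \<Longrightarrow> v b \<le> t" "\<And>b. b \<in> C - U \<Longrightarrow> t \<le> v b"
  obtains S' where "S' \<subseteq> U" "card S' = card S" "sum v S' \<le> sum v S"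
proof -
  have fin: "finite S" "finite U" using assms(1-3) finite_subset by auto
  define In where "In = S \<inter> U"
  define Out where "Out = S - U"
  have S_split: "S = In \<union> Out" "In \<inter> Out = {}" unfolding In_def Out_def by auto
  have fin_IO: "finite In" "finite Out" using fin(1) unfolding In_def Out_def by auto
  have card_S: "card S = card In + card Out" using card_Un_disjoint[OF fin_IO S_split(2)] S_split(1) by simp
  have "card (U - S) = card U - card In"
    using card_Diff_subset_Int[of U S] fin(2) unfolding In_def by (simp add: Int_commute)
  then have "card Out \<le> card (U - S)" using card_S assms(4) by simp
  then obtain T where T: "T \<subseteq> U - S" "card T = card Out" "finite T"
    using obtain_subset_with_card_n by metis
  have IT: "In \<inter> T = {}" using T(1) unfolding In_def by auto
  have "sum v (In \<union> T) = sum v In + sum v T" using sum.union_disjoint[OF fin_IO(1) T(3) IT] .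
  also have "sum v T \<le> real (card Out) * t"
    using sum_bounded_above[of T v t] assms(5) T by auto
  also have "real (card Out) * t \<le> sum v Out"
    using sum_bounded_below[of Out t v] assms(3,6) unfolding Out_def by auto
  also have "sum v In + sum v Out = sum v S"
    using sum.union_disjoint[OF fin_IO S_split(2), of v] S_split(1) by simp
  finally show thesis
    using that[of "In \<union> T"] card_Un_disjoint[OF fin_IO(1) T(3) IT] T card_S unfolding In_def
    by auto
qed

lemma min_subset_sum_lower_set:
  fixes v :: "'a \<Rightarrow> real"
  assumes "finite C" "U \<subseteq> C"
    and "\<And>b. b \<in> U \<Longrightarrow> v b \<le> t" "\<And>b. b \<in> C - U \<Longrightarrow> t \<le> v b"
  shows "min_subset_sum C (card U) v = sum v U"
proof (rule antisym)
  show "min_subset_sum C (card U) v \<le> sum v U" using min_subset_sum_le assms(1,2) by blast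
  have "card U \<le> card C" using assms(1,2) card_mono by blast
  moreover have "sum v U \<le> sum v S" if S: "S \<subseteq> C" "card S = card U" for S
  proof -
    obtain S' where "S' \<subseteq> U" "card S' = card S" "sum v S' \<le> sum v S"
      using exchange_into_lower_set[OF assms(1,2) S(1)] S(2) assms(3,4) by auto
    moreover have "finite U" using assms(1,2) finite_subset by blast
    ultimately show ?thesis using S(2) card_subset_eq by metis
  qed
  ultimately show "sum v U \<le> min_subset_sum C (card U) v"
    using min_subset_sum_greatest[OF assms(1)] by blast
qed

lemma min_subset_sum_mono_below_lower_set:
  fixes v w :: "'a \<Rightarrow> real"
  assumes "finite C" "U \<subseteq> C" "j \<le> card U"
    and "\<And>b. b \<in> U \<Longrightarrow> v b \<le> t" "\<And>b. b \<in> C - U \<Longrightarrow> t \<le> v b"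
    and "\<And>b. b \<in> U \<Longrightarrow> w b \<le> v b"
  shows "min_subset_sum C j w \<le> min_subset_sum C j v"
proof (rule min_subset_sum_greatest[OF assms(1)])
  show "j \<le> card C" using card_mono[OF assms(1,2)] assms(3) by simp
  fix S assume S: "S \<subseteq> C" "card S = j"
  have "card S \<le> card U" using S(2) assms(3) by simp
  then obtain S' where S': "S' \<subseteq> U" "card S' = card S" "sum v S' \<le> sum v S"
    by (rule exchange_into_lower_set[OF assms(1,2) S(1) _ assms(4,5)])
  have "min_subset_sum C j w \<le> sum w S'"
    using min_subset_sum_le[OF assms(1) subset_trans[OF S'(1) assms(2)] S'(2)] S(2) by simp
  also have "\<dots> \<le> sum v S'" using S'(1) assms(6) by (intro sum_mono) auto
  finally show "min_subset_sum C j w \<le> sum v S" using S'(3) by simp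
qed

lemma min_subset_sum_diff_ge:
  fixes v w :: "'a \<Rightarrow> real"
  assumes "finite C" "j \<le> card C"
  shows "min_subset_sum C j w - (\<Sum>b\<in>C. max 0 (w b - v b)) \<le> min_subset_sum C j v"
proof (rule min_subset_sum_greatest[OF assms])
  fix S assume S: "S \<subseteq> C" "card S = j"
  have "sum w S - sum v S = (\<Sum>b\<in>S. w b - v b)" by (simp add: sum_subtractf)
  also have "\<dots> \<le> (\<Sum>b\<in>S. max 0 (w b - v b))" by (intro sum_mono) auto
  also have "\<dots> \<le> (\<Sum>b\<in>C. max 0 (w b - v b))" by (intro sum_mono2 assms(1) S(1)) auto
  moreover have "min_subset_sum C j w \<le> sum w S" using min_subset_sum_le[OF assms(1) S] .
  ultimately show "min_subset_sum C j w - (\<Sum>b\<in>C. max 0 (w b - v b)) \<le> sum v S"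
    by linarith
qed

lemma l1norm_diff_eq_twice_loss:
  fixes v w :: "'a \<Rightarrow> real"
  assumes "sum w C = sum v C"
  shows "l1norm C (\<lambda>b. v b - w b) = 2 * (\<Sum>b\<in>C. max 0 (w b - v b))"
proof -
  have "l1norm C (\<lambda>b. v b - w b) = (\<Sum>b\<in>C. (v b - w b) + 2 * max 0 (w b - v b))"
    unfolding l1norm_def by (intro sum.cong) (auto simp: abs_if max_def)
  also have "\<dots> = (\<Sum>b\<in>C. v b - w b) + 2 * (\<Sum>b\<in>C. max 0 (w b - v b))"
    by (simp add: sum.distrib sum_distrib_left)
  finally show ?thesis using assms by (simp add: sum_subtractf)
qed

definition subset_potential :: "'a set \<Rightarrow> nat \<Rightarrow> real \<Rightarrow> ('a \<Rightarrow> real) \<Rightarrow> real" where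
  "subset_potential C k y w = (\<Sum>j\<in>{1..<k}. y ^ (k - j) * (real j / real k - min_subset_sum C j w))"

lemma subset_potential_nonneg:
  assumes "finite C" "card C = k" "sum w C = 1" "y \<ge> 0"
  shows "0 \<le> subset_potential C k y w"
  unfolding subset_potential_def
proof (intro sum_nonneg mult_nonneg_nonneg)
  fix j assume j: "j \<in> {1..<k}"
  show "0 \<le> y ^ (k - j)" using assms(4) by simp
  obtain S where S: "S \<subseteq> C" "card S = j" "real k * sum w S \<le> real j"
    using exists_subset_sum_le_average[OF assms(1), of j w] j assms(2,3) by auto
  have "min_subset_sum C j w \<le> sum w S" using min_subset_sum_le[OF assms(1) S(1,2)] .
  also have "sum w S \<le> real j / real k" using S(3) j by (simp add: field_simps)
  finally show "0 \<le> real j / real k - min_subset_sum C j w" by simp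
qed

lemma weighted_geometric_sum:
  fixes A :: real
  assumes "1 \<le> k"
  shows "A * A * (\<Sum>j\<in>{1..<k}. real j * (1 + A) ^ (k - j)) + real k * A * (1 + A) + (1 + A)
         = (1 + A) ^ (k + 1)"
  using assms
proof (induction k)
  case 0
  then show ?case by simp
next
  case (Suc k)
  show ?case
  proof (cases "k = 0")
    case True
    then show ?thesis by (simp add: algebra_simps power2_eq_square)
  next
    case False
    define G where "G = (\<Sum>j\<in>{1..<k}. real j * (1 + A) ^ (k - j))"
    have "(\<Sum>j\<in>{1..<k}. real j * (1 + A) ^ (Suc k - j)) = (1 + A) * G"
      unfolding G_def sum_distrib_left by (intro sum.cong refl) (auto simp: Suc_diff_le)
    then have "(\<Sum>j\<in>{1..<Suc k}. real j * (1 + A) ^ (Suc k - j)) = (1 + A) * G + real k * (1 + A)"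
      using False by (simp add: sum.atLeastLessThan_Suc)
    moreover have "A * A * G + real k * A * (1 + A) + (1 + A) = (1 + A) ^ (k + 1)"
      using Suc False unfolding G_def by simp
    moreover have "A * A * ((1 + A) * G + real k * (1 + A)) + real (Suc k) * A * (1 + A) + (1 + A)
        = (1 + A) * (A * A * G + real k * A * (1 + A) + (1 + A))"
      by (simp add: algebra_simps)
    ultimately show ?thesis by simp
  qed
qed

lemma abs_le_disc:
  assumes "finite C" "b \<in> C"
  shows "\<bar>w b - 1 / real (card C)\<bar> \<le> disc C w"
  unfolding disc_def using assms by (intro Max_ge) auto

lemma subset_potential_le_disc:
  fixes A :: real
  assumes "finite C" "card C = k" "1 \<le> k" "A > 0"
    and "\<And>b. b \<in> C \<Longrightarrow> \<bar>w b - 1 / real k\<bar> \<le> D"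
  shows "A * subset_potential C k (1 + A) w \<le> (1 + A) ^ (k + 1) / A * D"
proof -
  have "real j / real k - min_subset_sum C j w \<le> D * real j" if j: "j \<in> {1..<k}" for j
  proof -
    have "real j * (1 / real k - D) \<le> min_subset_sum C j w"
    proof (rule min_subset_sum_greatest[OF assms(1)])
      show "j \<le> card C" using j assms(2) by simp
      fix S assume S: "S \<subseteq> C" "card S = j"
      have "1 / real k - D \<le> w b" if "b \<in> S" for b
        using assms(5)[of b] S(1) that by (auto simp: abs_le_iff)
      then show "real j * (1 / real k - D) \<le> sum w S"
        using sum_bounded_below[of S "1 / real k - D" w] S(2) by simp
    qed
    then show ?thesis by (simp add: algebra_simps)
  qed
  then have "(1 + A) ^ (k - j) * (real j / real k - min_subset_sum C j w)
      \<le> D * (real j * (1 + A) ^ (k - j))" if "j \<in> {1..<k}" for j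
    using mult_left_mono[of _ _ "(1 + A) ^ (k - j)"] assms(4) that by (simp add: ac_simps)
  then have "subset_potential C k (1 + A) w \<le> D * (\<Sum>j\<in>{1..<k}. real j * (1 + A) ^ (k - j))"
    unfolding subset_potential_def sum_distrib_left by (rule sum_mono)
  then have "A * A * subset_potential C k (1 + A) w
      \<le> A * A * (D * (\<Sum>j\<in>{1..<k}. real j * (1 + A) ^ (k - j)))"
    by (rule mult_left_mono) (rule zero_le_square)
  also have "\<dots> = D * (A * A * (\<Sum>j\<in>{1..<k}. real j * (1 + A) ^ (k - j)))"
    by (simp add: ac_simps)
  also have "\<dots> \<le> D * (1 + A) ^ (k + 1)"
  proof (rule mult_left_mono)
    obtain b where "b \<in> C" using assms(2,3) by fastforce
    show "0 \<le> D" using order_trans[OF abs_ge_zero assms(5)[OF \<open>b \<in> C\<close>]] .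
    show "A * A * (\<Sum>j\<in>{1..<k}. real j * (1 + A) ^ (k - j)) \<le> (1 + A) ^ (k + 1)"
    proof -
      have "0 \<le> real k * A * (1 + A) + (1 + A)" using assms(4) by simp
      then show ?thesis using weighted_geometric_sum[OF assms(3), of A] by linarith
    qed
  qed
  finally show ?thesis using assms(4) by (simp add: field_simps)
qed

lemma geometric_sum_tail:
  fixes A :: real
  assumes "m < k"
  shows "A * (\<Sum>j\<in>{Suc m..<k}. (1 + A) ^ (k - j)) = (1 + A) ^ (k - m) - (1 + A)"
  using assms
proof (induction k)
  case 0
  then show ?case by simp
next
  case (Suc k)
  show ?case
  proof (cases "m = k")
    case True
    then show ?thesis by simp
  next
    case False
    then have "m < k" using Suc by simp
    define G where "G = (\<Sum>j\<in>{Suc m..<k}. (1 + A) ^ (k - j))"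
    have "(\<Sum>j\<in>{Suc m..<k}. (1 + A) ^ (Suc k - j)) = (1 + A) * G"
      unfolding G_def sum_distrib_left by (intro sum.cong refl) (auto simp: Suc_diff_le)
    then have "(\<Sum>j\<in>{Suc m..<Suc k}. (1 + A) ^ (Suc k - j)) = (1 + A) * G + (1 + A)"
      using \<open>m < k\<close> by (simp add: sum.atLeastLessThan_Suc)
    moreover have "(1 + A) ^ (Suc k - m) = (1 + A) * (1 + A) ^ (k - m)"
      using \<open>m < k\<close> by (simp add: Suc_diff_le)
    moreover have "A * G = (1 + A) ^ (k - m) - (1 + A)"
      using Suc.IH[OF \<open>m < k\<close>] unfolding G_def .
    ultimately show ?thesis by (simp add: algebra_simps)
  qed
qed

text \<open>
  A gain \<open>d / A\<close> at index \<open>m\<close> outweighs losses of \<open>d / 2\<close> at all later indices, because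
  \<open>A\<close> times the tail of the weights is \<open>(1 + A)\<^sup>k\<^sup>-\<^sup>m - (1 + A)\<close>.
\<close>

lemma weighted_gain_dominates_losses:
  fixes A d :: real and D :: "nat \<Rightarrow> real"
  assumes "A \<ge> 0" "0 \<le> d" "1 \<le> m" "m < k"
    and "\<And>j. 1 \<le> j \<Longrightarrow> j < m \<Longrightarrow> 0 \<le> D j"
    and "d \<le> A * D m"
    and "\<And>j. m < j \<Longrightarrow> j < k \<Longrightarrow> - (d / 2) \<le> D j"
  shows "d * (1 + A) \<le> 2 * A * (\<Sum>j\<in>{1..<k}. (1 + A) ^ (k - j) * D j)"
proof -
  define y where "y = 1 + A"
  have y: "0 < y" unfolding y_def using assms(1) by simp
  have split: "(\<Sum>j\<in>{1..<k}. y ^ (k - j) * D j)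
      = (\<Sum>j\<in>{1..<m}. y ^ (k - j) * D j) + y ^ (k - m) * D m + (\<Sum>j\<in>{Suc m..<k}. y ^ (k - j) * D j)"
    using sum.atLeastLessThan_concat[of 1 m k "\<lambda>j. y ^ (k - j) * D j", symmetric] assms(3,4)
      sum.atLeast_Suc_lessThan[of m k "\<lambda>j. y ^ (k - j) * D j"] by simp
  have "0 \<le> A * (\<Sum>j\<in>{1..<m}. y ^ (k - j) * D j)"
    using assms(1,5) y by (intro mult_nonneg_nonneg sum_nonneg) auto
  moreover have "d * y ^ (k - m) \<le> A * (y ^ (k - m) * D m)"
    using mult_left_mono[OF assms(6), of "y ^ (k - m)"] y by (simp add: algebra_simps)
  moreover have "d * y - d * y ^ (k - m) \<le> 2 * (A * (\<Sum>j\<in>{Suc m..<k}. y ^ (k - j) * D j))"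
  proof -
    define G where "G = (\<Sum>j\<in>{Suc m..<k}. y ^ (k - j))"
    have "G * (- (d / 2)) \<le> (\<Sum>j\<in>{Suc m..<k}. y ^ (k - j) * D j)"
      unfolding G_def sum_distrib_right using assms(7) y by (intro sum_mono mult_left_mono) auto
    then have "A * (G * (- (d / 2))) \<le> A * (\<Sum>j\<in>{Suc m..<k}. y ^ (k - j) * D j)"
      using assms(1) by (rule mult_left_mono)
    moreover have "A * (G * (- (d / 2))) = - (d / 2) * (A * G)" by simp
    moreover have "A * G = y ^ (k - m) - y"
      unfolding G_def y_def using geometric_sum_tail[OF assms(4)] .
    ultimately show ?thesis by (simp add: algebra_simps)
  qed
  moreover have "0 \<le> d * y ^ (k - m)" using assms(2) y by simp
  moreover have "2 * A * (\<Sum>j\<in>{1..<k}. y ^ (k - j) * D j)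
      = 2 * (A * (\<Sum>j\<in>{1..<m}. y ^ (k - j) * D j)) + 2 * (A * (y ^ (k - m) * D m))
        + 2 * (A * (\<Sum>j\<in>{Suc m..<k}. y ^ (k - j) * D j))"
    unfolding split by (simp add: algebra_simps)
  ultimately show ?thesis unfolding y_def[symmetric] by linarith
qed

text \<open>
  A losing element lies in \<open>Dminus C w v\<close>, so it is not below the witness; hence no element of
  \<open>U\<close> loses mass.
\<close>

lemma tri_less_gaining_lower_set:
  fixes w v :: "'a \<Rightarrow> real"
  assumes fin: "finite C" and "sum w C = sum v C" and "tri_less C w v"
  obtains U a where "U \<subseteq> C" "a \<in> U" "w a < v a" "a \<in> Dplus C w v"
    "\<And>b. b \<in> U \<Longrightarrow> v b \<le> v a" "\<And>b. b \<in> C - U \<Longrightarrow> v a \<le> v b"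
    "\<And>b. b \<in> U \<Longrightarrow> w b \<le> v b" "1 \<le> card U" "card U < card C"
proof -
  obtain a where a: "a \<in> Dplus C w v" and a_min: "\<And>b. b \<in> Dminus C w v \<Longrightarrow> v a \<le> v b"
    using assms(3) unfolding tri_less_def by auto
  then have "a \<in> C" "w a < v a" unfolding Dplus_def by auto
  define U where "U = insert a {b\<in>C. v b < v a}"
  have U: "U \<subseteq> C" "a \<in> U" unfolding U_def using \<open>a \<in> C\<close> by auto
  have U_lower: "\<And>b. b \<in> U \<Longrightarrow> v b \<le> v a" "\<And>b. b \<in> C - U \<Longrightarrow> v a \<le> v b"
    unfolding U_def by auto
  have U_gain: "w b \<le> v b" if "b \<in> U" for b
  proof (rule ccontr)
    assume "\<not> w b \<le> v b"
    then have "b \<in> Dminus C w v" "b \<noteq> a"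
      using that U(1) \<open>w a < v a\<close> unfolding Dminus_def by auto
    then have "v a \<le> v b" "v b < v a" using a_min that unfolding U_def by auto
    then show False by simp
  qed
  obtain g where "g \<in> C" "v g < w g"
  proof (rule ccontr)
    assume "\<not> thesis"
    then have "\<forall>b\<in>C. w b \<le> v b" using that by fastforce
    then have "sum w C < sum v C"
      using \<open>a \<in> C\<close> \<open>w a < v a\<close> fin by (intro sum_strict_mono_ex1) auto
    then show False using assms(2) by simp
  qed
  then have "g \<notin> U" using U_gain by fastforce
  then have "U \<subset> C" using U(1) \<open>g \<in> C\<close> by blast
  then have "card U < card C" by (rule psubset_card_mono[OF fin])
  moreover have "1 \<le> card U"
    using U finite_subset[OF U(1) fin] by (simp add: Suc_le_eq card_gt_0_iff) blast
  ultimately show thesis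
    using that[OF U \<open>w a < v a\<close> a U_lower] U_gain by blast
qed

lemma subset_potential_decrease:
  fixes w v :: "'a \<Rightarrow> real" and A :: real
  assumes fin: "finite C" and "card C = k" and "sum w C = 1" and "sum v C = 1"
    and "tri_less C w v" and "A \<ge> 0"
    and gain: "\<And>\<alpha>. \<alpha> \<in> Dplus C w v \<Longrightarrow> l1norm C (\<lambda>\<beta>. v \<beta> - w \<beta>) \<le> A * (v \<alpha> - w \<alpha>)"
  shows "l1norm C (\<lambda>\<beta>. v \<beta> - w \<beta>) * (1 + A)
         \<le> 2 * A * (subset_potential C k (1 + A) w - subset_potential C k (1 + A) v)"
proof -
  define d where "d = l1norm C (\<lambda>\<beta>. v \<beta> - w \<beta>)"
  have "sum w C = sum v C" using assms(3,4) by simp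
  then obtain U a where U: "U \<subseteq> C" "a \<in> U" "w a < v a" "a \<in> Dplus C w v"
    and U_lower: "\<And>b. b \<in> U \<Longrightarrow> v b \<le> v a" "\<And>b. b \<in> C - U \<Longrightarrow> v a \<le> v b"
    and U_gain: "\<And>b. b \<in> U \<Longrightarrow> w b \<le> v b" and card_U: "1 \<le> card U" "card U < card C"
    by (rule tri_less_gaining_lower_set[OF fin _ assms(5)]) blast
  have "finite U" using U(1) fin finite_subset by blast
  have "d \<le> A * (v a - w a)" unfolding d_def using gain U(4) .
  also have "v a - w a \<le> sum v U - sum w U"
    using sum.remove[OF \<open>finite U\<close> U(2), of "\<lambda>b. v b - w b"] U_gain
      sum_nonneg[of "U - {a}" "\<lambda>b. v b - w b"]
    by (simp add: sum_subtractf)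
  also have "\<dots> \<le> min_subset_sum C (card U) v - min_subset_sum C (card U) w"
    using min_subset_sum_lower_set[OF fin U(1) U_lower] min_subset_sum_le[OF fin U(1) refl, of w]
    by simp
  finally have gain_at_U: "d \<le> A * (min_subset_sum C (card U) v - min_subset_sum C (card U) w)"
    using assms(6) by (simp add: mult_left_mono)
  have loss: "- (d / 2) \<le> min_subset_sum C j v - min_subset_sum C j w" if "j < k" for j
    using min_subset_sum_diff_ge[OF fin, of j w v] l1norm_diff_eq_twice_loss[of w C v] that assms(2-4)
    unfolding d_def by simp
  have no_loss_below_U: "0 \<le> min_subset_sum C j v - min_subset_sum C j w" if "j < card U" for j
    using min_subset_sum_mono_below_lower_set[OF fin U(1) _ U_lower U_gain] that by simp
  have "0 \<le> d" unfolding d_def l1norm_def by (simp add: sum_nonneg)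
  have "d * (1 + A) \<le> 2 * A * (\<Sum>j\<in>{1..<k}. (1 + A) ^ (k - j)
                                    * (min_subset_sum C j v - min_subset_sum C j w))"
    by (rule weighted_gain_dominates_losses[where m = "card U"])
      (use assms(2,6) \<open>0 \<le> d\<close> card_U gain_at_U no_loss_below_U loss in auto)
  also have "(\<Sum>j\<in>{1..<k}. (1 + A) ^ (k - j) * (min_subset_sum C j v - min_subset_sum C j w))
      = subset_potential C k (1 + A) w - subset_potential C k (1 + A) v"
    unfolding subset_potential_def sum_subtractf[symmetric] by (intro sum.cong) (auto simp: algebra_simps)
  finally show ?thesis unfolding d_def .
qed

lemma subset_potential_cong:
  assumes "\<And>x. x \<in> C \<Longrightarrow> w x = v x"
  shows "subset_potential C k y w = subset_potential C k y v"
proof -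
  have "\<And>j. min_subset_sum C j w = min_subset_sum C j v" using assms by (rule min_subset_sum_cong)
  then show ?thesis unfolding subset_potential_def by simp
qed

lemma subset_potential_step:
  fixes w v :: "'a \<Rightarrow> real" and A :: real
  assumes "finite C" and "card C = k" and "sum w C = 1" and "sum v C = 1"
    and "tri_le C w v" and "A \<ge> 1"
    and "\<And>\<alpha>. \<alpha> \<in> Dplus C w v \<Longrightarrow> l1norm C (\<lambda>\<beta>. v \<beta> - w \<beta>) \<le> A * (v \<alpha> - w \<alpha>)"
  shows "l1norm C (\<lambda>\<beta>. v \<beta> - w \<beta>) \<le> A * (subset_potential C k (1 + A) w - subset_potential C k (1 + A) v)"
proof (cases "tri_less C w v")
  case True
  have "0 \<le> l1norm C (\<lambda>\<beta>. v \<beta> - w \<beta>)" unfolding l1norm_def by (simp add: sum_nonneg)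
  then have "l1norm C (\<lambda>\<beta>. v \<beta> - w \<beta>) * 2 \<le> l1norm C (\<lambda>\<beta>. v \<beta> - w \<beta>) * (1 + A)"
    using assms(6) by (intro mult_left_mono) auto
  then show ?thesis
    using subset_potential_decrease[OF assms(1-4) True _ assms(7)] assms(6) by simp
next
  case False
  then have "\<And>x. x \<in> C \<Longrightarrow> w x = v x" using assms(5) unfolding tri_le_def by auto
  then show ?thesis using subset_potential_cong[of C w v] unfolding l1norm_def by simp
qed

lemma summable_le_potential:
  fixes d F :: "nat \<Rightarrow> real"
  assumes "\<And>n. 0 \<le> d n" "\<And>n. 0 \<le> F n" "\<And>n. d n \<le> F n - F (Suc n)"
  shows "summable d \<and> suminf d \<le> F 0"
proof -
  have partial: "(\<Sum>n<N. d n) \<le> F 0" for N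
  proof -
    have "(\<Sum>n<N. d n) \<le> (\<Sum>n<N. F n - F (Suc n))" using assms(3) by (rule sum_mono)
    also have "\<dots> = F 0 - F N" by (rule sum_lessThan_telescope')
    finally show ?thesis using assms(2)[of N] by simp
  qed
  then have "summable d"
    using assms(1) partial[of "Suc _"] by (intro bounded_imp_summable[of d "F 0"]) (auto simp: lessThan_Suc_atMost)
  then show ?thesis using suminf_le_const partial by blast
qed

theorem lemma3p2:
  fixes C :: "'a set" and k :: nat and \<omega> :: "nat \<Rightarrow> 'a \<Rightarrow> real" and A :: real
  assumes "finite C" and "card C = k" and "k \<ge> 1"
    and "\<And>n. is_distribution C (\<omega> n)"
    and "\<And>n. tri_le C (\<omega> n) (\<omega> (Suc n))"
    and "A \<ge> 1"
    and "\<And>n \<alpha>. \<alpha> \<in> Dplus C (\<omega> n) (\<omega> (Suc n)) \<Longrightarrow>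
           l1norm C (\<lambda>\<beta>. \<omega> (Suc n) \<beta> - \<omega> n \<beta>) \<le> A * (\<omega> (Suc n) \<alpha> - \<omega> n \<alpha>)"
  shows "summable (\<lambda>n. l1norm C (\<lambda>\<beta>. \<omega> (Suc n) \<beta> - \<omega> n \<beta>)) \<and>
         (\<Sum>n. l1norm C (\<lambda>\<beta>. \<omega> (Suc n) \<beta> - \<omega> n \<beta>)) \<le> (1 + A) ^ (k + 1) / A * disc C (\<omega> 0)"
proof -
  define F where "F n = A * subset_potential C k (1 + A) (\<omega> n)" for n
  have sums: "sum (\<omega> n) C = 1" for n using assms(4) unfolding is_distribution_def by auto
  have "summable (\<lambda>n. l1norm C (\<lambda>\<beta>. \<omega> (Suc n) \<beta> - \<omega> n \<beta>)) \<and>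
        (\<Sum>n. l1norm C (\<lambda>\<beta>. \<omega> (Suc n) \<beta> - \<omega> n \<beta>)) \<le> F 0"
  proof (rule summable_le_potential)
    show "0 \<le> l1norm C (\<lambda>\<beta>. \<omega> (Suc n) \<beta> - \<omega> n \<beta>)" for n by (simp add: l1norm_def sum_nonneg)
    show "0 \<le> F n" for n
      unfolding F_def using subset_potential_nonneg[OF assms(1,2) sums] assms(6) by simp
    show "l1norm C (\<lambda>\<beta>. \<omega> (Suc n) \<beta> - \<omega> n \<beta>) \<le> F n - F (Suc n)" for n
      using subset_potential_step[OF assms(1,2) sums sums assms(5,6,7)]
      unfolding F_def by (simp add: right_diff_distrib)
  qed
  moreover have "F 0 \<le> (1 + A) ^ (k + 1) / A * disc C (\<omega> 0)"
    unfolding F_def using assms(6) abs_le_disc[OF assms(1)] assms(2)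
    by (intro subset_potential_le_disc[OF assms(1-3)]) auto
  ultimately show ?thesis by linarith
qed

end
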